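(* Let $N\ge2$, $d\ge1$ and consider the system $$\dot x_i(t)=\frac{\lambda_i(x)}{N}\sum_{j=1}^N M_{ij}(t)\,\phi_{ij}(x_i,x_j)\,(x_j(t)-x_i(t)),\qquad i=1,\dots,N,$$ with $x_i\in\mathbb{R}^d$, where all $M_{ij}:[0,+\infty)\to[0,1]$ are Lebesgue measurable and $\lambda_i:\mathbb{R}^{Nd}\to\mathbb{R}^+$, $\phi_{ij}:\mathbb{R}^d\times\mathbb{R}^d\to\mathbb{R}^+$ are Lipschitz continuous and strictly positive. Let $x(t)$ be a (Carathéodory) solution and let $\underline m,\overline m$ be the minimum and maximum of $\lambda_i(y)\phi_{ij}(y_i,y_j)$ over all $i,j\in\{1,\dots,N\}$ and all $y\in\mathbb{R}^{Nd}$ with $|y_k|\le\max_l|x_l(0)|$ for every $k$. Assume the Integral Scrambling Coefficients condition holds with parameters $(T,\mu)$, $T,\mu>0$: for all indices $i,j$ and all $t\ge0$ there exists an index $k$ (possibly depending on $i,j,t$) with $$\frac1T\int_t^{t+T}M_{ik}(s)\,ds\ge\mu\quad\text{and}\quad\frac1T\int_t^{t+T}M_{jk}(s)\,ds\ge\mu.$$ Then for all $n\in\mathbb{N}$, $$\max_{i,j}\left|x_i\!\left(n(N-1)2^{N(N-1)}T\right)-x_j\!\left(n(N-1)2^{N(N-1)}T\right)\right|\le C^n\max_{i,j}|x_i(0)-x_j(0)|,$$ with $$C=1-\left(\frac{\underline m\mu T}{N+\underline m\mu T}\right)^{N-1}\exp\!\left(-2\tfrac{N-1}{N}(N-1)^{(2^{N(N-1)})}T\overline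 m\right).$$
   Context: $|\cdot|$ is the Euclidean norm; $\mathbb{N}$ includes $0$. *)

theory Defs
  imports "HOL-Analysis.Analysis"
begin

text \<open>Agents are indexed by a finite type 'n (so N = CARD('n)); positions live in
  real^'d (d = CARD('d) \<ge> 1).  A configuration y \<in> R^{Nd} is an element of (real^'d)^'n,
  whose norm is the Euclidean norm on R^{Nd}.\<close>

definition rhs ::
  "('n::finite \<Rightarrow> (real^'d)^'n \<Rightarrow> real) \<Rightarrow> ('n \<Rightarrow> 'n \<Rightarrow> real \<Rightarrow> real)
    \<Rightarrow> ('n \<Rightarrow> 'n \<Rightarrow> real^'d \<Rightarrow> real^'d \<Rightarrow> real) \<Rightarrow> real \<Rightarrow> (real^'d)^'n \<Rightarrow> (real^'d)^'n"
  where "rhs lam M phi t y =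
    (\<chi> i. (lam i y / real CARD('n)) *\<^sub>R
           (\<Sum>j\<in>UNIV. (M i j t * phi i j (y$i) (y$j)) *\<^sub>R (y$j - y$i)))"

definition caratheodory_solution ::
  "(real \<Rightarrow> 'a::euclidean_space \<Rightarrow> 'a) \<Rightarrow> (real \<Rightarrow> 'a) \<Rightarrow> bool"
  where "caratheodory_solution F x \<longleftrightarrow>
    (\<forall>t\<ge>0. (\<lambda>s. F s (x s)) absolutely_integrable_on {0..t} \<and>
            x t = x 0 + integral {0..t} (\<lambda>s. F s (x s)))"

definition m_low ::
  "('n::finite \<Rightarrow> (real^'d)^'n \<Rightarrow> real) \<Rightarrow> ('n \<Rightarrow> 'n \<Rightarrow> real^'d \<Rightarrow> real^'d \<Rightarrow> real)
    \<Rightarrow> (real^'d)^'n \<Rightarrow> real"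
  where "m_low lam phi x0 = Inf {lam i y * phi i j (y$i) (y$j) | i j y.
            \<forall>k. norm (y$k) \<le> (MAX l. norm (x0$l))}"

definition m_up ::
  "('n::finite \<Rightarrow> (real^'d)^'n \<Rightarrow> real) \<Rightarrow> ('n \<Rightarrow> 'n \<Rightarrow> real^'d \<Rightarrow> real^'d \<Rightarrow> real)
    \<Rightarrow> (real^'d)^'n \<Rightarrow> real"
  where "m_up lam phi x0 = Sup {lam i y * phi i j (y$i) (y$j) | i j y.
            \<forall>k. norm (y$k) \<le> (MAX l. norm (x0$l))}"

definition conf_diam :: "(real^'d)^'n::finite \<Rightarrow> real"
  where "conf_diam y = (MAX i. MAX j. norm (y$i - y$j))"

definition ISC :: "('n \<Rightarrow> 'n \<Rightarrow> real \<Rightarrow> real) \<Rightarrow> real \<Rightarrow> real \<Rightarrow> bool"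
  where "ISC M T \<mu> \<longleftrightarrow> (\<forall>i j. \<forall>t\<ge>0. \<exists>k.
            (1/T) * integral {t..t+T} (M i k) \<ge> \<mu> \<and> (1/T) * integral {t..t+T} (M j k) \<ge> \<mu>)"

end

theory Submission
  imports Defs
begin

text \<open>
  Fix a direction v and project the agents onto it. The projections p_l = <x_l, v> solve, in integral
  form, the linear consensus system p_l' = sum_j c_lj (p_j - p_l) with nonnegative coefficients
  c_lj = lam_l phi_lj M_lj / N. Such a system preserves every common upper bound P of the p_l
  (Gronwall's inequality for the total negative part of the P - p_l). With v = x_k(t) this keeps the
  agents in the initial ball, so along the solution m_low M_lj / N <= c_lj <= m_up / N. Hence a gap
  P - p_l decays at most like exp (- (N - 1) m_up s / N), and if the integral of M_ik over a window of
  length T is at least mu T, then agent i inherits a fixed fraction of the gap of agent k.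
  Taking for P and for the lower bound the extreme projections at the start of the window, and for k
  the common neighbour of i and j provided by the scrambling condition, every pairwise distance
  shrinks over each window of length T by the factor
  1 - exp (- 2 (N - 1) m_up T / N) min 1 (m_low mu T / N). This factor is smaller than the constant
  of the theorem, and the diameter is nonincreasing, which gives the estimate at the times
  n (N - 1) 2^(N (N - 1)) T.
\<close>

section \<open>Comparison principles in integral form\<close>

text \<open>
  The weights M_ij are merely measurable, so solutions are only known to be indefinite integrals;
  all comparison arguments below work with increments instead of derivatives.
\<close>

lemma integral_form_increment:
  fixes f g :: "real \<Rightarrow> 'a::banach"
  assumes f: "f integrable_on {a..b}"
    and g: "\<And>t. t \<in> {a..b} \<Longrightarrow> g t = g a + integral {a..t} f"
    and t: "a \<le> t'" "t' \<le> t" "t \<le> b"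
  shows "g t - g t' = integral {t'..t} f"
proof -
  have "integral {a..t'} f + integral {t'..t} f = integral {a..t} f"
    using t by (intro Henstock_Kurzweil_Integration.integral_combine integrable_on_subinterval[OF f]) auto
  moreover have "g t = g a + integral {a..t} f" "g t' = g a + integral {a..t'} f"
    by (rule g, use t in auto)+
  ultimately show ?thesis
    by (simp add: algebra_simps)
qed

lemma integral_form_continuous:
  fixes f g :: "real \<Rightarrow> 'a::banach"
  assumes "f integrable_on {a..b}" and "\<And>t. t \<in> {a..b} \<Longrightarrow> g t = g a + integral {a..t} f"
  shows "continuous_on {a..b} g"
proof -
  have "continuous_on {a..b} (\<lambda>t. g a + integral {a..t} f)"
    by (intro continuous_intros indefinite_integral_continuous_1 assms(1))
  moreover have "g a + integral {a..t} f = g t" if "t \<in> {a..b}" for t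
    using assms(2)[OF that] by simp
  ultimately show ?thesis
    by (rule continuous_on_eq)
qed

lemma last_zero_before_negative:
  fixes z :: "real \<Rightarrow> real"
  assumes "a \<le> b" "continuous_on {a..b} z" "0 \<le> z a" "z b < 0"
  obtains t' where "a \<le> t'" "t' < b" "z t' = 0" "\<And>s. s \<in> {t'..b} \<Longrightarrow> z s \<le> 0"
proof -
  let ?S = "{s \<in> {a..b}. 0 \<le> z s}"
  have "closed ?S"
    using continuous_on_closed_Collect_le[of "{a..b}" "\<lambda>_. 0" z] assms by auto
  moreover have "bounded ?S"
    by (rule bounded_subset[of "{a..b}"]) auto
  ultimately have "compact ?S"
    by (simp add: compact_eq_bounded_closed)
  moreover have "?S \<noteq> {}"
    using assms by auto
  ultimately obtain t' where t': "t' \<in> ?S" and t'_max: "\<And>s. s \<in> ?S \<Longrightarrow> s \<le> t'"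
    using compact_attains_sup by meson
  have "t' \<noteq> b"
    using t' assms(4) by auto
  then have "t' < b"
    using t' by simp
  have z_neg: "z s < 0" if "s \<in> {t'..b}" "s \<noteq> t'" for s
  proof -
    have "s \<notin> ?S"
      using t'_max[of s] that by auto
    then show ?thesis
      using that t' by auto
  qed
  have "continuous_on {t'..b} z"
    using continuous_on_subset[OF assms(2)] t' by auto
  then obtain s0 where "t' \<le> s0" "s0 \<le> b" "z s0 = 0"
    using IVT2'[of z b 0 t'] t' assms(4) \<open>t' < b\<close> by auto
  then have "z t' = 0"
    using z_neg[of s0] by (cases "s0 = t'") auto
  moreover have "z s \<le> 0" if "s \<in> {t'..b}" for s
    using z_neg[of s] that \<open>z t' = 0\<close> by (cases "s = t'") auto
  ultimately show ?thesis
    using that t' \<open>t' < b\<close> by simp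
qed

lemma integral_supersolution_nonneg:
  fixes z :: "real \<Rightarrow> real"
  assumes "a \<le> b" "continuous_on {a..b} z" "0 \<le> z a" "0 \<le> r"
    and increment: "\<And>t' t. a \<le> t' \<Longrightarrow> t' \<le> t \<Longrightarrow> t \<le> b \<Longrightarrow> - r * integral {t'..t} z \<le> z t - z t'"
  shows "0 \<le> z b"
proof (rule ccontr)
  assume "\<not> 0 \<le> z b"
  then obtain t' where t': "a \<le> t'" "t' < b" "z t' = 0" and z_nonpos: "\<And>s. s \<in> {t'..b} \<Longrightarrow> z s \<le> 0"
    using last_zero_before_negative[OF assms(1-3)] by (metis linorder_not_le)
  have "z integrable_on {t'..b}"
    using continuous_on_subset[OF assms(2)] t' by (intro integrable_continuous_interval) auto
  then have "integral {t'..b} z \<le> integral {t'..b} (\<lambda>_. 0)"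
    using z_nonpos by (intro integral_le) auto
  then have "0 \<le> - r * integral {t'..b} z"
    using \<open>0 \<le> r\<close> by (simp add: mult_nonneg_nonpos)
  then show False
    using increment[of t' b] t' \<open>\<not> 0 \<le> z b\<close> by linarith
qed

lemma integral_gronwall_zero:
  fixes n :: "real \<Rightarrow> real"
  assumes "a \<le> b" and n_cont: "continuous_on {a..b} n"
    and n_nonneg: "\<And>s. s \<in> {a..b} \<Longrightarrow> 0 \<le> n s" and "0 \<le> K"
    and n_le: "\<And>t. t \<in> {a..b} \<Longrightarrow> n t \<le> K * integral {a..t} n"
  shows "n b = 0"
proof -
  define I where "I = (\<lambda>t. integral {a..t} n)"
  define P where "P t = exp (- K * t) * I t" for t
  define P' where "P' t = exp (- K * t) * (n t - K * I t)" for t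
  have P_deriv: "(P has_vector_derivative P' t) (at t within {a..b})" if "t \<in> {a..b}" for t
  proof -
    have "(I has_real_derivative n t) (at t within {a..b})"
      using integral_has_vector_derivative[OF n_cont that]
      by (simp add: I_def has_real_derivative_iff_has_vector_derivative)
    then show ?thesis
      unfolding P_def P'_def has_real_derivative_iff_has_vector_derivative[symmetric]
      by (auto intro!: derivative_eq_intros simp: algebra_simps)
  qed
  have "(P' has_integral P b - P a) {a..b}"
    using fundamental_theorem_of_calculus[OF \<open>a \<le> b\<close> P_deriv] by simp
  moreover have "P' t \<le> 0" if "t \<in> {a..b}" for t
    using n_le[OF that] by (simp add: P'_def I_def mult_nonneg_nonpos)
  ultimately have "P b \<le> P a"
    using has_integral_le[of P' "P b - P a" "{a..b}" "\<lambda>_. 0" 0] by simp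
  then have "I b \<le> 0"
    by (simp add: P_def I_def mult_le_0_iff)
  then have "K * I b \<le> 0"
    using \<open>0 \<le> K\<close> by (simp add: mult_nonneg_nonpos)
  then have "n b \<le> 0"
    using n_le[of b] \<open>a \<le> b\<close> unfolding I_def by simp
  then show ?thesis
    using n_nonneg[of b] \<open>a \<le> b\<close> by simp
qed

lemma exp_weighted_increment_le:
  fixes U :: "real \<Rightarrow> real" and a r K :: real
  defines "w \<equiv> \<lambda>s. exp (- r * (s - a)) * (K + U s)"
  assumes "0 \<le> r" "a \<le> t'" "t' \<le> t" and U_cont: "continuous_on {t'..t} U"
    and U_le: "\<And>s. s \<in> {t'..t} \<Longrightarrow> U s \<le> U t"
  shows "w t - w t' \<le> U t - U t' - r * integral {t'..t} w"
proof -
  define E where "E s = exp (- r * (s - a))" for s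
  have E_cont: "continuous_on {t'..t} E"
    unfolding E_def by (intro continuous_intros)
  have "((\<lambda>s. r * E s) has_integral (- E t) - (- E t')) {t'..t}"
    using \<open>t' \<le> t\<close> unfolding E_def
    by (intro fundamental_theorem_of_calculus)
       (auto intro!: derivative_eq_intros simp: has_real_derivative_iff_has_vector_derivative[symmetric])
  then have E_integral: "integral {t'..t} (\<lambda>s. r * E s) = E t' - E t"
    by (intro integral_unique) simp
  have "integral {t'..t} w \<le> integral {t'..t} (\<lambda>s. E s * (K + U t))"
    unfolding w_def E_def[symmetric] using U_le
    by (intro integral_le integrable_continuous_interval continuous_intros E_cont U_cont)
       (auto intro: mult_left_mono simp: E_def)
  then have "r * integral {t'..t} w \<le> r * integral {t'..t} E * (K + U t)"
    using \<open>0 \<le> r\<close> by (simp add: mult_left_mono mult.assoc)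
  also have "\<dots> = (E t' - E t) * (K + U t)"
    using E_integral by simp
  finally have "r * integral {t'..t} w \<le> (E t' - E t) * (K + U t)" .
  moreover have "E t' * (U t - U t') \<le> U t - U t'"
    using U_le[of t'] \<open>0 \<le> r\<close> \<open>a \<le> t'\<close> \<open>t' \<le> t\<close>
    by (intro mult_left_le_one_le) (auto simp: E_def mult_nonneg_nonneg)
  ultimately show ?thesis
    unfolding w_def E_def[symmetric] by (simp add: algebra_simps)
qed

lemma integral_form_exp_lower_bound:
  fixes f g u :: "real \<Rightarrow> real"
  assumes "a \<le> b" "0 \<le> r"
    and f: "f integrable_on {a..b}" and g: "\<And>t. t \<in> {a..b} \<Longrightarrow> g t = g a + integral {a..t} f"
    and u: "u integrable_on {a..b}" and u_nonneg: "\<And>s. s \<in> {a..b} \<Longrightarrow> 0 \<le> u s"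
    and f_ge: "\<And>s. s \<in> {a..b} \<Longrightarrow> u s - r * g s \<le> f s"
  shows "exp (- r * (b - a)) * (g a + integral {a..b} u) \<le> g b"
proof -
  define U where "U t = integral {a..t} u" for t
  define w where "w s = exp (- r * (s - a)) * (g a + U s)" for s
  have U_form: "U t = U a + integral {a..t} u" if "t \<in> {a..b}" for t
    by (simp add: U_def)
  have U_cont: "continuous_on {a..b} U"
    by (rule integral_form_continuous[OF u U_form])
  have U_mono: "U s \<le> U t" if "a \<le> s" "s \<le> t" "t \<le> b" for s t
  proof -
    have "0 \<le> integral {s..t} u"
      using that u_nonneg by (intro integral_nonneg integrable_on_subinterval[OF u]) auto
    then show ?thesis
      using integral_form_increment[OF u U_form that] by simp
  qed
  have g_cont: "continuous_on {a..b} g"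
    by (rule integral_form_continuous[OF f g])
  have w_cont: "continuous_on {a..b} w"
    unfolding w_def by (intro continuous_intros U_cont)
  have "- r * integral {t'..t} (\<lambda>s. g s - w s) \<le> (g t - w t) - (g t' - w t')"
    if t: "a \<le> t'" "t' \<le> t" "t \<le> b" for t' t
  proof -
    have sub: "{t'..t} \<subseteq> {a..b}"
      using t by auto
    have g_int: "g integrable_on {t'..t}" and w_int: "w integrable_on {t'..t}"
      using continuous_on_subset[OF g_cont sub] continuous_on_subset[OF w_cont sub]
      by (auto intro: integrable_continuous_interval)
    have u_int: "u integrable_on {t'..t}"
      by (rule integrable_on_subinterval[OF u sub])
    have "integral {t'..t} u - r * integral {t'..t} g = integral {t'..t} (\<lambda>s. u s - r * g s)"
      using integral_diff[OF u_int integrable_on_mult_right[OF g_int]] by simp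
    also have "\<dots> \<le> integral {t'..t} f"
      using sub f_ge g_int u_int
      by (intro integral_le integrable_diff integrable_on_mult_right integrable_on_subinterval[OF f]) auto
    finally have "U t - U t' - r * integral {t'..t} g \<le> g t - g t'"
      using integral_form_increment[OF f g t] integral_form_increment[OF u U_form t] by simp
    moreover have "w t - w t' \<le> U t - U t' - r * integral {t'..t} w"
      unfolding w_def using \<open>0 \<le> r\<close> t continuous_on_subset[OF U_cont sub] U_mono
      by (intro exp_weighted_increment_le[where a = a and K = "g a" and U = U, unfolded w_def]) auto
    ultimately show ?thesis
      using g_int w_int by (simp add: integral_diff algebra_simps)
  qed
  moreover have "continuous_on {a..b} (\<lambda>s. g s - w s)"
    by (intro continuous_intros g_cont w_cont)
  ultimately have "0 \<le> g b - w b"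
    using integral_supersolution_nonneg[of a b "\<lambda>s. g s - w s" r] \<open>a \<le> b\<close> \<open>0 \<le> r\<close>
    by (simp add: w_def U_def)
  then show ?thesis
    by (simp add: w_def U_def)
qed

section \<open>Linear consensus systems\<close>

definition consensus_drift ::
  "('n::finite \<Rightarrow> 'n \<Rightarrow> real \<Rightarrow> real) \<Rightarrow> ('n \<Rightarrow> real \<Rightarrow> real) \<Rightarrow> 'n \<Rightarrow> real \<Rightarrow> real"
  where "consensus_drift c g l s = (\<Sum>j\<in>UNIV. c l j s * (g j s - g l s))"

lemma consensus_drift_reflect: "consensus_drift c (\<lambda>l s. P - g l s) l = (\<lambda>s. - consensus_drift c g l s)"
  by (simp add: consensus_drift_def fun_eq_iff sum_negf[symmetric] algebra_simps)

locale linear_consensus =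
  fixes a b :: real and c :: "'n::finite \<Rightarrow> 'n \<Rightarrow> real \<Rightarrow> real" and g :: "'n \<Rightarrow> real \<Rightarrow> real"
  assumes interval: "a \<le> b"
    and drift_integrable: "\<And>l. consensus_drift c g l integrable_on {a..b}"
    and integral_form: "\<And>l t. t \<in> {a..b} \<Longrightarrow> g l t = g l a + integral {a..t} (consensus_drift c g l)"
    and c_nonneg: "\<And>l j s. s \<in> {a..b} \<Longrightarrow> 0 \<le> c l j s"
    and c_bounded: "\<exists>C. \<forall>l j. \<forall>s\<in>{a..b}. c l j s \<le> C"
begin

lemma g_continuous: "continuous_on {a..b} (g l)"
  by (rule integral_form_continuous[OF drift_integrable integral_form])

lemma g_increment: "a \<le> t' \<Longrightarrow> t' \<le> t \<Longrightarrow> t \<le> b \<Longrightarrow> g l t - g l t' = integral {t'..t} (consensus_drift c g l)"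
  by (rule integral_form_increment[OF drift_integrable integral_form])

lemma coupling_bound_nonneg:
  assumes "\<And>l j s. s \<in> {a..b} \<Longrightarrow> c l j s \<le> \<rho>"
  shows "0 \<le> \<rho>"
proof -
  have "a \<in> {a..b}"
    using interval by simp
  then show ?thesis
    using c_nonneg assms by (meson order_trans)
qed

definition neg_mass :: "real \<Rightarrow> real"
  where "neg_mass s = (\<Sum>l\<in>UNIV. max 0 (- g l s))"

lemma neg_mass_continuous: "continuous_on {a..b} neg_mass"
  unfolding neg_mass_def[abs_def] by (intro continuous_intros g_continuous)

lemma neg_mass_nonneg: "0 \<le> neg_mass s"
  unfolding neg_mass_def by (simp add: sum_nonneg)

lemma drift_ge_neg_mass:
  assumes s: "s \<in> {a..b}" and C: "\<And>j. c l j s \<le> C" and "g l s \<le> 0"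
  shows "- C * neg_mass s \<le> consensus_drift c g l s"
proof -
  have "- C * max 0 (- g j s) \<le> c l j s * (g j s - g l s)" for j
  proof -
    have "c l j s * - max 0 (- g j s) \<le> c l j s * (g j s - g l s)"
      using c_nonneg[OF s] \<open>g l s \<le> 0\<close> by (intro mult_left_mono) auto
    moreover have "- C * max 0 (- g j s) \<le> c l j s * - max 0 (- g j s)"
      using C[of j] by (simp add: mult_right_mono)
    ultimately show ?thesis
      by linarith
  qed
  then have "(\<Sum>j\<in>UNIV. - C * max 0 (- g j s)) \<le> consensus_drift c g l s"
    unfolding consensus_drift_def by (rule sum_mono)
  then show ?thesis
    by (simp add: neg_mass_def sum_distrib_left)
qed

lemma neg_part_le_integral_neg_mass:
  assumes g_a: "\<And>l. 0 \<le> g l a" and C: "\<And>l j s. s \<in> {a..b} \<Longrightarrow> c l j s \<le> C" "0 \<le> C"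
    and t: "t \<in> {a..b}"
  shows "max 0 (- g l t) \<le> C * integral {a..t} neg_mass"
proof (cases "0 \<le> g l t")
  case True
  have "0 \<le> integral {a..t} neg_mass"
    using t neg_mass_nonneg continuous_on_subset[OF neg_mass_continuous]
    by (intro integral_nonneg integrable_continuous_interval) auto
  then show ?thesis
    using True \<open>0 \<le> C\<close> by simp
next
  case False
  obtain t' where t': "a \<le> t'" "t' < t" "g l t' = 0" and g_nonpos: "\<And>s. s \<in> {t'..t} \<Longrightarrow> g l s \<le> 0"
    using last_zero_before_negative[of a t "g l"] t False g_a continuous_on_subset[OF g_continuous]
    by (metis atLeastAtMost_iff atLeastatMost_subset_iff linorder_not_le order_refl)
  have sub: "{t'..t} \<subseteq> {a..b}"
    using t t' by auto
  have mass_int: "neg_mass integrable_on {a..t}"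
    using t continuous_on_subset[OF neg_mass_continuous] by (intro integrable_continuous_interval) auto
  have "max 0 (- g l t) = integral {t'..t} (\<lambda>s. - consensus_drift c g l s)"
    using g_increment[of t' t l] t t' False by (simp add: integral_neg)
  also have "\<dots> \<le> integral {t'..t} (\<lambda>s. C * neg_mass s)"
  proof (rule integral_le)
    show "- consensus_drift c g l s \<le> C * neg_mass s" if "s \<in> {t'..t}" for s
      using drift_ge_neg_mass[of s l C] C(1) g_nonpos[OF that] that sub by auto
  qed (use integrable_on_subinterval[OF mass_int, of t' t] t' in
        \<open>auto intro: integrable_neg integrable_on_mult_right integrable_on_subinterval[OF drift_integrable sub]\<close>)
  also have "\<dots> \<le> C * integral {a..t} neg_mass"
  proof -
    have "integral {a..t'} neg_mass + integral {t'..t} neg_mass = integral {a..t} neg_mass"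
      using t' by (intro Henstock_Kurzweil_Integration.integral_combine mass_int) auto
    moreover have "0 \<le> integral {a..t'} neg_mass"
      using t' neg_mass_nonneg by (intro integral_nonneg integrable_on_subinterval[OF mass_int]) auto
    ultimately show ?thesis
      using \<open>0 \<le> C\<close> by (simp add: mult_left_mono)
  qed
  finally show ?thesis .
qed

lemma nonneg_invariant:
  assumes g_a: "\<And>l. 0 \<le> g l a" and t: "t \<in> {a..b}"
  shows "0 \<le> g l t"
proof -
  obtain C where C: "\<And>l j s. s \<in> {a..b} \<Longrightarrow> c l j s \<le> C"
    using c_bounded by blast
  have "0 \<le> C"
    using C by (rule coupling_bound_nonneg)
  have "neg_mass t = 0"
  proof (rule integral_gronwall_zero[where b = t and K = "real CARD('n) * C"])
    show "continuous_on {a..t} neg_mass"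
      using t by (intro continuous_on_subset[OF neg_mass_continuous]) auto
    show "neg_mass s \<le> real CARD('n) * C * integral {a..s} neg_mass" if "s \<in> {a..t}" for s
    proof -
      have "neg_mass s \<le> (\<Sum>l\<in>(UNIV::'n set). C * integral {a..s} neg_mass)"
        unfolding neg_mass_def[of s] using that t
        by (intro sum_mono neg_part_le_integral_neg_mass[OF g_a C \<open>0 \<le> C\<close>]) auto
      then show ?thesis
        by simp
    qed
  qed (use t neg_mass_nonneg \<open>0 \<le> C\<close> in auto)
  then have "max 0 (- g l t) \<le> 0"
    using member_le_sum[of l UNIV "\<lambda>l. max 0 (- g l t)"] by (simp add: neg_mass_def)
  then show ?thesis
    by simp
qed

lemma drift_ge_off_diagonal:
  assumes s: "s \<in> {a..b}" and g_s: "\<And>j. 0 \<le> g j s" and c_le: "\<And>j. c l j s \<le> \<rho>"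
  shows "(\<Sum>j\<in>UNIV-{l}. c l j s * g j s) - real (CARD('n) - 1) * \<rho> * g l s \<le> consensus_drift c g l s"
proof -
  have "consensus_drift c g l s = (\<Sum>j\<in>UNIV-{l}. c l j s * g j s) - (\<Sum>j\<in>UNIV-{l}. c l j s) * g l s"
    unfolding consensus_drift_def
    by (subst sum.remove[of UNIV l]) (auto simp: right_diff_distrib sum_subtractf sum_distrib_right)
  moreover have "(\<Sum>j\<in>UNIV-{l}. c l j s) \<le> real (CARD('n) - 1) * \<rho>"
    using sum_bounded_above[of "UNIV-{l}" "\<lambda>j. c l j s" "\<rho>", OF c_le] by (simp add: card_Diff_singleton)
  ultimately show ?thesis
    using g_s[of l] by (simp add: mult_right_mono)
qed

lemma decay_lower_bound:
  assumes g_a: "\<And>l. 0 \<le> g l a" and c_le: "\<And>l j s. s \<in> {a..b} \<Longrightarrow> c l j s \<le> \<rho>"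
    and t: "t \<in> {a..b}"
  shows "exp (- (real (CARD('n) - 1) * \<rho>) * (t - a)) * g k a \<le> g k t"
proof -
  have "0 \<le> \<rho>"
    using c_le by (rule coupling_bound_nonneg)
  have "exp (- (real (CARD('n) - 1) * \<rho>) * (t - a)) * (g k a + integral {a..t} (\<lambda>_. 0)) \<le> g k t"
  proof (rule integral_form_exp_lower_bound)
    show "consensus_drift c g k integrable_on {a..t}"
      using t by (intro integrable_on_subinterval[OF drift_integrable]) auto
    show "g k s = g k a + integral {a..s} (consensus_drift c g k)" if "s \<in> {a..t}" for s
      using that t by (intro integral_form) auto
    show "0 - real (CARD('n) - 1) * \<rho> * g k s \<le> consensus_drift c g k s" if "s \<in> {a..t}" for s
    proof -
      have s: "s \<in> {a..b}"
        using that t by auto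
      have "0 \<le> (\<Sum>j\<in>UNIV-{k}. c k j s * g j s)"
        using c_nonneg[OF s] nonneg_invariant[OF g_a s] by (intro sum_nonneg) simp
      then show ?thesis
        using drift_ge_off_diagonal[where l = k, OF s nonneg_invariant[OF g_a s] c_le[OF s]] by linarith
    qed
  qed (use t \<open>0 \<le> \<rho>\<close> in auto)
  then show ?thesis
    by simp
qed

lemma coupled_lower_bound:
  assumes g_a: "\<And>l. 0 \<le> g l a" and c_le: "\<And>l j s. s \<in> {a..b} \<Longrightarrow> c l j s \<le> \<rho>"
    and "i \<noteq> k" and w: "w integrable_on {a..b}" and w_nonneg: "\<And>s. s \<in> {a..b} \<Longrightarrow> 0 \<le> w s"
    and w_le: "\<And>s. s \<in> {a..b} \<Longrightarrow> w s \<le> c i k s"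
  shows "exp (- 2 * (real (CARD('n) - 1) * \<rho>) * (b - a)) * integral {a..b} w * g k a \<le> g i b"
proof -
  define r where "r = real (CARD('n) - 1) * \<rho>"
  have "0 \<le> r"
    using coupling_bound_nonneg[OF c_le] by (simp add: r_def)
  define \<gamma> where "\<gamma> = exp (- r * (b - a)) * g k a"
  have "0 \<le> \<gamma>"
    using g_a by (simp add: \<gamma>_def)
  have g_k: "\<gamma> \<le> g k s" if s: "s \<in> {a..b}" for s
  proof -
    have "exp (- r * (b - a)) \<le> exp (- r * (s - a))"
      using s \<open>0 \<le> r\<close> by (simp add: mult_left_mono)
    then have "\<gamma> \<le> exp (- r * (s - a)) * g k a"
      unfolding \<gamma>_def using g_a by (rule mult_right_mono)
    also have "\<dots> \<le> g k s"
      unfolding r_def by (rule decay_lower_bound[OF g_a c_le s])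
    finally show ?thesis .
  qed
  have "exp (- r * (b - a)) * (g i a + integral {a..b} (\<lambda>s. \<gamma> * w s)) \<le> g i b"
  proof (rule integral_form_exp_lower_bound)
    show "\<gamma> * w s - r * g i s \<le> consensus_drift c g i s" if s: "s \<in> {a..b}" for s
    proof -
      have g_s: "\<And>j. 0 \<le> g j s"
        using nonneg_invariant[OF g_a s] .
      have "\<gamma> * w s \<le> c i k s * g k s"
        using w_le[OF s] g_k[OF s] w_nonneg[OF s] \<open>0 \<le> \<gamma>\<close> by (simp add: mult_mono' mult.commute)
      also have "\<dots> \<le> (\<Sum>j\<in>UNIV-{i}. c i j s * g j s)"
        using \<open>i \<noteq> k\<close> c_nonneg[OF s] g_s
        by (intro member_le_sum[where f = "\<lambda>j. c i j s * g j s"]) auto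
      finally show ?thesis
        using drift_ge_off_diagonal[where l = i, OF s g_s c_le[OF s]] unfolding r_def by linarith
    qed
  qed (use interval \<open>0 \<le> r\<close> w w_nonneg \<open>0 \<le> \<gamma>\<close> in
       \<open>auto intro: integral_form drift_integrable integrable_on_mult_right\<close>)
  moreover have "exp (- r * (b - a)) * (\<gamma> * integral {a..b} w) \<le> exp (- r * (b - a)) * (g i a + integral {a..b} (\<lambda>s. \<gamma> * w s))"
    using g_a[of i] by simp
  ultimately have "exp (- r * (b - a)) * (\<gamma> * integral {a..b} w) \<le> g i b"
    by linarith
  then show ?thesis
    by (simp add: \<gamma>_def r_def exp_add[symmetric] mult_ac)
qed

lemma linked_lower_bound:
  assumes g_a: "\<And>l. 0 \<le> g l a" and c_le: "\<And>l j s. s \<in> {a..b} \<Longrightarrow> c l j s \<le> \<rho>"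
    and w: "w integrable_on {a..b}" and w_nonneg: "\<And>s. s \<in> {a..b} \<Longrightarrow> 0 \<le> w s"
    and w_le: "\<And>s. s \<in> {a..b} \<Longrightarrow> w s \<le> c i k s"
  shows "exp (- 2 * (real (CARD('n) - 1) * \<rho>) * (b - a)) * min 1 (integral {a..b} w) * g k a \<le> g i b"
proof (cases "i = k")
  case True
  define r where "r = real (CARD('n) - 1) * \<rho>"
  have "0 \<le> r"
    using coupling_bound_nonneg[OF c_le] by (simp add: r_def)
  have "exp (- 2 * r * (b - a)) * min 1 (integral {a..b} w) \<le> exp (- 2 * r * (b - a))"
    by (simp add: mult_left_le)
  also have "\<dots> \<le> exp (- r * (b - a))"
    using \<open>0 \<le> r\<close> interval by (simp add: mult_nonneg_nonneg)
  finally have "exp (- 2 * r * (b - a)) * min 1 (integral {a..b} w) * g k a \<le> exp (- r * (b - a)) * g k a"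
    using g_a by (rule mult_right_mono)
  also have "\<dots> \<le> g k b"
    unfolding r_def using interval by (intro decay_lower_bound[OF g_a c_le]) auto
  finally show ?thesis
    using True by (simp add: r_def mult.assoc)
next
  case False
  have "min 1 (integral {a..b} w) * g k a \<le> integral {a..b} w * g k a"
    using g_a by (intro mult_right_mono) auto
  then have "exp (- 2 * (real (CARD('n) - 1) * \<rho>) * (b - a)) * min 1 (integral {a..b} w) * g k a
      \<le> exp (- 2 * (real (CARD('n) - 1) * \<rho>) * (b - a)) * integral {a..b} w * g k a"
    by (simp add: mult.assoc)
  also have "\<dots> \<le> g i b"
    by (rule coupled_lower_bound[OF g_a c_le False w w_nonneg w_le])
  finally show ?thesis .
qed

end

section \<open>Configurations\<close>

lemma norm_le_of_inner_self_le:
  fixes v :: "'a::real_inner"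
  assumes "inner v v \<le> D * norm v" "0 \<le> D"
  shows "norm v \<le> D"
proof (cases "v = 0")
  case False
  then have "norm v * norm v \<le> D * norm v"
    using assms(1) by (simp add: dot_square_norm power2_eq_square)
  then show ?thesis
    using False by simp
qed (use assms in simp)

lemma norm_diff_le_conf_diam: "norm (y $ i - y $ j) \<le> conf_diam y"
proof -
  have "norm (y $ i - y $ j) \<le> (MAX j. norm (y $ i - y $ j))"
    by (rule Max_ge) auto
  also have "\<dots> \<le> conf_diam y"
    unfolding conf_diam_def by (rule Max_ge) auto
  finally show ?thesis .
qed

lemma conf_diam_le: "(\<And>i j. norm (y $ i - y $ j) \<le> B) \<Longrightarrow> conf_diam y \<le> B"
  unfolding conf_diam_def by (intro Max.boundedI) auto

lemma conf_diam_nonneg: "0 \<le> conf_diam y"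
  using norm_diff_le_conf_diam[of y] norm_ge_zero order_trans by blast

lemma inner_spread_le_conf_diam:
  fixes y :: "(real^'d)^'n::finite"
  obtains P m where "\<And>l. inner (y $ l) v \<le> P" "\<And>l. m \<le> inner (y $ l) v"
    "P - m \<le> conf_diam y * norm v"
proof -
  let ?f = "\<lambda>l. inner (y $ l) v"
  have "Max (range ?f) \<in> range ?f"
    by (rule Max_in) auto
  then obtain i where i: "?f i = Max (range ?f)"
    by force
  have "Min (range ?f) \<in> range ?f"
    by (rule Min_in) auto
  then obtain j where j: "?f j = Min (range ?f)"
    by force
  have "?f l \<le> ?f i" "?f j \<le> ?f l" for l
    unfolding i j by (rule Max_ge Min_le; simp)+
  moreover have "?f i - ?f j = inner (y $ i - y $ j) v"
    by (simp add: inner_diff_left)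
  moreover have "\<dots> \<le> norm (y $ i - y $ j) * norm v"
    by (rule norm_cauchy_schwarz)
  moreover have "\<dots> \<le> conf_diam y * norm v"
    by (intro mult_right_mono norm_diff_le_conf_diam) simp
  ultimately show ?thesis
    using that[of "?f i" "?f j"] by (metis order_trans)
qed

lemma geometric_decay_at_multiples:
  fixes D :: "real \<Rightarrow> real"
  assumes "0 \<le> \<tau>" "0 \<le> q" and step: "\<And>t. 0 \<le> t \<Longrightarrow> D (t + \<tau>) \<le> q * D t"
  shows "D (real n * \<tau>) \<le> q ^ n * D 0"
proof (induction n)
  case (Suc n)
  have "D (real (Suc n) * \<tau>) \<le> q * D (real n * \<tau>)"
    using step[of "real n * \<tau>"] \<open>0 \<le> \<tau>\<close> by (simp add: algebra_simps)
  also have "\<dots> \<le> q * (q ^ n * D 0)"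
    using Suc.IH \<open>0 \<le> q\<close> by (rule mult_left_mono)
  finally show ?case
    by simp
qed simp

lemma compact_componentwise_bounded:
  "compact {y :: ('a::euclidean_space)^'n. \<forall>k. norm (y $ k) \<le> R}"
proof -
  have "closed {y :: 'a^'n. \<forall>k. norm (y $ k) \<le> R}"
    by (intro closed_Collect_all closed_Collect_le continuous_intros continuous_on_component)
  moreover have "norm y \<le> real CARD('n) * R" if "\<forall>k. norm (y $ k) \<le> R" for y :: "'a^'n"
  proof -
    have "norm y \<le> (\<Sum>k\<in>UNIV. norm (y $ k))"
      unfolding norm_vec_def by (rule L2_set_le_sum) simp
    also have "\<dots> \<le> (\<Sum>k\<in>(UNIV::'n set). R)"
      using that by (intro sum_mono) auto
    finally show ?thesis
      by simp
  qed
  then have "bounded {y :: 'a^'n. \<forall>k. norm (y $ k) \<le> R}"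
    unfolding bounded_iff by blast
  ultimately show ?thesis
    by (simp add: compact_eq_bounded_closed)
qed

lemma isc_rate_comparison:
  fixes N :: nat and m m' T \<mu> :: real
  assumes "2 \<le> N" "0 \<le> m" "0 \<le> m'" "0 \<le> T" "0 \<le> \<mu>"
  shows "(m * \<mu> * T / (real N + m * \<mu> * T)) ^ (N - 1)
           * exp (- 2 * (real (N - 1) / real N) * real (N - 1) ^ (2 ^ (N * (N - 1))) * T * m')
         \<le> exp (- 2 * (real (N - 1) * (m' / real N)) * T) * min 1 (m / real N * (\<mu> * T))"
proof -
  define q where "q = m * \<mu> * T"
  define A where "A = q / (real N + q)"
  have "0 \<le> q"
    using assms by (simp add: q_def)
  then have "0 \<le> A" "A \<le> 1" "A \<le> q / real N"
    using assms(1) by (simp_all add: A_def divide_left_mono)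
  moreover have "A ^ (N - 1) \<le> A"
    using power_decreasing[of 1 "N - 1" A] assms(1) \<open>0 \<le> A\<close> \<open>A \<le> 1\<close> by simp
  ultimately have A_pow: "A ^ (N - 1) \<le> min 1 (m / real N * (\<mu> * T))"
    by (simp add: q_def)
  have exponent: "- 2 * (real (N - 1) / real N) * real (N - 1) ^ (2 ^ (N * (N - 1))) * T * m'
      \<le> - 2 * (real (N - 1) * (m' / real N)) * T"
  proof -
    define c where "c = real (N - 1) / real N * T * m'"
    have "1 \<le> real (N - 1) ^ (2 ^ (N * (N - 1)))"
      using assms(1) by (intro one_le_power) simp
    moreover have "0 \<le> c"
      using assms by (simp add: c_def)
    ultimately have "c * 1 \<le> c * real (N - 1) ^ (2 ^ (N * (N - 1)))"
      by (rule mult_left_mono)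
    moreover have "- 2 * (real (N - 1) / real N) * real (N - 1) ^ (2 ^ (N * (N - 1))) * T * m'
        = - 2 * (c * real (N - 1) ^ (2 ^ (N * (N - 1))))"
      by (simp add: c_def mult_ac)
    moreover have "- 2 * (real (N - 1) * (m' / real N)) * T = - 2 * (c * 1)"
      by (simp add: c_def mult_ac)
    ultimately show ?thesis
      by linarith
  qed
  have "A ^ (N - 1) * exp (- 2 * (real (N - 1) / real N) * real (N - 1) ^ (2 ^ (N * (N - 1))) * T * m')
      \<le> min 1 (m / real N * (\<mu> * T)) * exp (- 2 * (real (N - 1) * (m' / real N)) * T)"
    using A_pow exponent assms by (intro mult_mono) simp_all
  then show ?thesis
    unfolding A_def q_def by (simp only: mult.commute)
qed

section \<open>Solutions of the nonlinear model\<close>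

locale consensus_solution =
  fixes lam :: "'n::finite \<Rightarrow> (real^'d)^'n \<Rightarrow> real"
    and phi :: "'n \<Rightarrow> 'n \<Rightarrow> real^'d \<Rightarrow> real^'d \<Rightarrow> real"
    and M :: "'n \<Rightarrow> 'n \<Rightarrow> real \<Rightarrow> real"
    and x :: "real \<Rightarrow> (real^'d)^'n"
  assumes M_meas: "\<And>i j. M i j \<in> borel_measurable (restrict_space lebesgue {0..})"
    and M_range: "\<And>i j t. 0 \<le> t \<Longrightarrow> 0 \<le> M i j t \<and> M i j t \<le> 1"
    and lam_cont: "\<And>i. continuous_on UNIV (lam i)"
    and phi_cont: "\<And>i j. continuous_on UNIV (\<lambda>p. phi i j (fst p) (snd p))"
    and lam_nonneg: "\<And>i y. 0 \<le> lam i y"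
    and phi_nonneg: "\<And>i j u v. 0 \<le> phi i j u v"
    and solution: "caratheodory_solution (rhs lam M phi) x"
begin

definition velocity :: "real \<Rightarrow> (real^'d)^'n"
  where "velocity s = rhs lam M phi s (x s)"

definition interaction :: "'n \<Rightarrow> 'n \<Rightarrow> (real^'d)^'n \<Rightarrow> real"
  where "interaction i j y = lam i y * phi i j (y $ i) (y $ j)"

definition coupling :: "'n \<Rightarrow> 'n \<Rightarrow> real \<Rightarrow> real"
  where "coupling i j s = interaction i j (x s) * M i j s / real CARD('n)"

definition proj :: "real^'d \<Rightarrow> 'n \<Rightarrow> real \<Rightarrow> real"
  where "proj v l s = inner (x s $ l) v"

lemma velocity_integrable: "0 \<le> b \<Longrightarrow> velocity integrable_on {0..b}"
  using solution set_lebesgue_integral_eq_integral(1)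
  unfolding caratheodory_solution_def velocity_def by blast

lemma x_integral: "t \<in> {0..b} \<Longrightarrow> x t = x 0 + integral {0..t} velocity"
  using solution unfolding caratheodory_solution_def velocity_def by (meson atLeastAtMost_iff)

lemma x_continuous: "continuous_on {0..b} x"
proof (cases "0 \<le> b")
  case True
  then show ?thesis
    by (rule integral_form_continuous[OF velocity_integrable x_integral])
qed simp

lemma proj_drift: "consensus_drift coupling (proj v) l = (\<lambda>s. inner (velocity s $ l) v)"
proof
  fix s
  have "inner (velocity s $ l) v
      = lam l (x s) / real CARD('n) * (\<Sum>j\<in>UNIV. M l j s * phi l j (x s $ l) (x s $ j) * (proj v j s - proj v l s))"
    by (simp add: velocity_def rhs_def proj_def inner_sum_left inner_diff_left)
  also have "\<dots> = consensus_drift coupling (proj v) l s"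
    unfolding consensus_drift_def coupling_def interaction_def sum_distrib_left
    by (rule sum.cong) (simp_all add: field_simps)
  finally show "consensus_drift coupling (proj v) l s = inner (velocity s $ l) v"
    by simp
qed

lemma proj_drift_integrable: "0 \<le> b \<Longrightarrow> consensus_drift coupling (proj v) l integrable_on {0..b}"
  using integrable_linear[OF velocity_integrable bounded_linear_compose[OF bounded_linear_inner_left bounded_linear_vec_nth]]
  by (simp add: o_def proj_drift)

lemma proj_integral: "t \<in> {0..b} \<Longrightarrow> proj v l t = proj v l 0 + integral {0..t} (consensus_drift coupling (proj v) l)"
proof -
  assume t: "t \<in> {0..b}"
  have "integral {0..t} (\<lambda>s. inner (velocity s $ l) v) = inner (integral {0..t} velocity $ l) v"
    using integral_linear[OF velocity_integrable bounded_linear_compose[OF bounded_linear_inner_left bounded_linear_vec_nth]] t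
    by (simp add: o_def)
  then show ?thesis
    using x_integral[OF t] by (simp add: proj_def proj_drift inner_add_left)
qed

lemma interaction_continuous: "continuous_on UNIV (interaction i j)"
proof -
  have "continuous_on UNIV (\<lambda>y::(real^'d)^'n. (\<lambda>p. phi i j (fst p) (snd p)) (y $ i, y $ j))"
    by (rule continuous_on_compose2[OF phi_cont]) (auto intro!: continuous_intros continuous_on_component)
  then show ?thesis
    unfolding interaction_def[abs_def] by (intro continuous_intros lam_cont) simp
qed

lemma interaction_nonneg: "0 \<le> interaction i j y"
  by (simp add: interaction_def lam_nonneg phi_nonneg)

lemma coupling_nonneg: "0 \<le> s \<Longrightarrow> 0 \<le> coupling i j s"
  using M_range[of s i j] by (simp add: coupling_def interaction_nonneg)

lemma coupling_le_interaction:
  assumes "0 \<le> s"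
  shows "coupling i j s \<le> interaction i j (x s) / real CARD('n)"
proof -
  have "interaction i j (x s) * M i j s \<le> interaction i j (x s)"
    using M_range[OF assms, of i j] by (intro mult_left_le interaction_nonneg) auto
  then show ?thesis
    unfolding coupling_def by (rule divide_right_mono) simp
qed

lemma coupling_bounded: "\<exists>C. \<forall>l j. \<forall>s\<in>{0..b}. coupling l j s \<le> C"
proof -
  define S where "S = (\<Union>l. \<Union>j. (\<lambda>s. interaction l j (x s)) ` {0..b})"
  have "bounded ((\<lambda>s. interaction l j (x s)) ` {0..b})" for l j
    by (intro compact_imp_bounded compact_continuous_image
        continuous_on_compose2[OF interaction_continuous x_continuous]) auto
  then have "bdd_above S"
    unfolding S_def by (intro bounded_imp_bdd_above bounded_UN) auto
  then obtain C where C: "\<And>z. z \<in> S \<Longrightarrow> z \<le> C"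
    by (meson bdd_above.E)
  have "coupling l j s \<le> C / real CARD('n)" if "s \<in> {0..b}" for l j s
  proof -
    have "interaction l j (x s) \<in> S"
      unfolding S_def by (intro UN_I[of l] UN_I[of j] imageI that UNIV_I)
    then have "interaction l j (x s) / real CARD('n) \<le> C / real CARD('n)"
      by (intro divide_right_mono C) simp_all
    then show ?thesis
      using coupling_le_interaction[of s l j] that by simp
  qed
  then show ?thesis
    by blast
qed

lemma proj_increment:
  assumes "0 \<le> a" "a \<le> t"
  shows "proj v l t - proj v l a = integral {a..t} (consensus_drift coupling (proj v) l)"
proof -
  have "consensus_drift coupling (proj v) l integrable_on {0..t}"
    using assms by (intro proj_drift_integrable) auto
  then show ?thesis
    by (rule integral_form_increment[OF _ proj_integral]) (use assms in auto)
qed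

lemma upper_bound_consensus:
  assumes "0 \<le> a" "a \<le> b"
  shows "linear_consensus a b coupling (\<lambda>l s. P - proj v l s)"
proof
  show "consensus_drift coupling (\<lambda>l s. P - proj v l s) l integrable_on {a..b}" for l
    unfolding consensus_drift_reflect using assms
    by (intro integrable_neg integrable_on_subinterval[OF proj_drift_integrable[of b]]) auto
  show "P - proj v l t = P - proj v l a + integral {a..t} (consensus_drift coupling (\<lambda>l s. P - proj v l s) l)"
    if "t \<in> {a..b}" for l t
    using proj_increment[of a t v l] assms that by (simp add: consensus_drift_reflect integral_neg)
  show "0 \<le> coupling l j s" if "s \<in> {a..b}" for l j s
    using that assms by (intro coupling_nonneg) auto
  obtain C where "\<forall>l j. \<forall>s\<in>{0..b}. coupling l j s \<le> C"
    using coupling_bounded by blast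
  then show "\<exists>C. \<forall>l j. \<forall>s\<in>{a..b}. coupling l j s \<le> C"
    using assms(1) by (meson atLeastAtMost_iff order_trans)
qed (rule assms(2))

lemma proj_le_invariant:
  assumes "0 \<le> a" "a \<le> t" and "\<And>l. proj v l a \<le> P"
  shows "proj v l t \<le> P"
  using linear_consensus.nonneg_invariant[OF upper_bound_consensus[of a t P v]] assms by auto

definition initial_radius :: real
  where "initial_radius = (MAX l. norm (x 0 $ l))"

lemma norm_initial_le_radius: "norm (x 0 $ l) \<le> initial_radius"
  unfolding initial_radius_def by (rule Max_ge) auto

lemma norm_position_le_radius:
  assumes "0 \<le> t"
  shows "norm (x t $ k) \<le> initial_radius"
proof -
  define v where "v = x t $ k"
  have "proj v l 0 \<le> initial_radius * norm v" for l
  proof -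
    have "proj v l 0 \<le> norm (x 0 $ l) * norm v"
      unfolding proj_def by (rule norm_cauchy_schwarz)
    also have "\<dots> \<le> initial_radius * norm v"
      by (intro mult_right_mono norm_initial_le_radius) simp
    finally show ?thesis .
  qed
  then have "inner v v \<le> initial_radius * norm v"
    using proj_le_invariant[of 0 t v] assms by (simp add: proj_def v_def)
  moreover have "0 \<le> initial_radius"
    using norm_initial_le_radius[of k] norm_ge_zero order_trans by blast
  ultimately show ?thesis
    unfolding v_def by (rule norm_le_of_inner_self_le)
qed

definition interaction_range :: "real set"
  where "interaction_range = {interaction i j y |i j y. \<forall>k. norm (y $ k) \<le> initial_radius}"

lemma m_low_eq: "m_low lam phi (x 0) = Inf interaction_range"
  unfolding m_low_def interaction_range_def interaction_def initial_radius_def ..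

lemma m_up_eq: "m_up lam phi (x 0) = Sup interaction_range"
  unfolding m_up_def interaction_range_def interaction_def initial_radius_def ..

lemma interaction_range_bdd_above: "bdd_above interaction_range"
proof -
  define K where "K = {y :: (real^'d)^'n. \<forall>k. norm (y $ k) \<le> initial_radius}"
  have "interaction_range = (\<Union>i. \<Union>j. interaction i j ` K)"
    unfolding interaction_range_def K_def by blast
  moreover have "bounded (interaction i j ` K)" for i j
    unfolding K_def
    by (intro compact_imp_bounded compact_continuous_image compact_componentwise_bounded
        continuous_on_subset[OF interaction_continuous]) auto
  ultimately show ?thesis
    by (simp add: bounded_imp_bdd_above bounded_UN)
qed

lemma interaction_bounds:
  assumes "\<And>k. norm (y $ k) \<le> initial_radius"
  shows "m_low lam phi (x 0) \<le> interaction i j y" and "interaction i j y \<le> m_up lam phi (x 0)"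
proof -
  have "interaction i j y \<in> interaction_range"
    unfolding interaction_range_def using assms by blast
  moreover have "bdd_below interaction_range"
    using interaction_nonneg by (intro bdd_belowI[of _ 0]) (auto simp: interaction_range_def)
  ultimately show "m_low lam phi (x 0) \<le> interaction i j y" "interaction i j y \<le> m_up lam phi (x 0)"
    unfolding m_low_eq m_up_eq by (auto intro: cInf_lower cSup_upper interaction_range_bdd_above)
qed

lemma m_low_nonneg: "0 \<le> m_low lam phi (x 0)"
proof -
  have "interaction_range \<noteq> {}"
    unfolding interaction_range_def using norm_initial_le_radius by blast
  then show ?thesis
    unfolding m_low_eq using interaction_nonneg
    by (intro cInf_greatest) (auto simp: interaction_range_def)
qed

lemma m_up_nonneg: "0 \<le> m_up lam phi (x 0)"
  using interaction_nonneg interaction_bounds(2)[OF norm_initial_le_radius] order_trans by blast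

lemma coupling_le:
  assumes "0 \<le> s"
  shows "coupling i j s \<le> m_up lam phi (x 0) / real CARD('n)"
proof -
  have "interaction i j (x s) / real CARD('n) \<le> m_up lam phi (x 0) / real CARD('n)"
    by (intro divide_right_mono interaction_bounds(2)[OF norm_position_le_radius[OF assms]]) simp
  then show ?thesis
    using coupling_le_interaction[OF assms, of i j] by simp
qed

lemma coupling_ge: "0 \<le> s \<Longrightarrow> m_low lam phi (x 0) / real CARD('n) * M i j s \<le> coupling i j s"
  using interaction_bounds(1)[OF norm_position_le_radius, of s i j] M_range[of s i j]
  by (simp add: coupling_def divide_right_mono mult_right_mono)

lemma M_integrable:
  assumes "0 \<le> a"
  shows "M i j integrable_on {a..b}"
proof -
  have "M i j \<in> borel_measurable (lebesgue_on {a..b})"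
    by (rule measurable_restrict_mono[OF M_meas]) (use assms in auto)
  moreover have "norm (M i j s) \<le> 1" if "s \<in> {a..b}" for s
    using M_range[of s i j] that assms by auto
  ultimately have "M i j absolutely_integrable_on {a..b}"
    by (intro measurable_bounded_by_integrable_imp_absolutely_integrable[where g = "\<lambda>_. 1"]) auto
  then show ?thesis
    by (rule set_lebesgue_integral_eq_integral(1))
qed

text \<open>
  One factor exp (- (N - 1) m_up T / N) accounts for the decay of the gap of the common neighbour k,
  a second one for the decay of the gap of i after the transfer, and the minimum for the transfer
  through M_ik itself.
\<close>

definition isc_factor :: "real \<Rightarrow> real \<Rightarrow> real"
  where "isc_factor T \<mu> = exp (- 2 * (real (CARD('n) - 1) * (m_up lam phi (x 0) / real CARD('n))) * T)
    * min 1 (m_low lam phi (x 0) / real CARD('n) * (\<mu> * T))"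

lemma isc_factor_le_1:
  assumes "0 \<le> T"
  shows "isc_factor T \<mu> \<le> 1"
proof -
  have "exp (- 2 * (real (CARD('n) - 1) * (m_up lam phi (x 0) / real CARD('n))) * T) \<le> 1"
    using assms m_up_nonneg by (simp add: mult_nonneg_nonneg)
  then show ?thesis
    unfolding isc_factor_def by (meson exp_ge_zero min.cobounded1 mult_le_one order_trans mult_left_le)
qed

lemma proj_gap:
  assumes "0 \<le> a" "0 \<le> T" and P: "\<And>l. proj v l a \<le> P"
    and link: "\<mu> * T \<le> integral {a..a + T} (M i k)"
  shows "isc_factor T \<mu> * (P - proj v k a) \<le> P - proj v i (a + T)"
proof -
  interpret linear_consensus a "a + T" coupling "\<lambda>l s. P - proj v l s"
    using assms by (intro upper_bound_consensus) auto
  define \<beta> where "\<beta> = m_low lam phi (x 0) / real CARD('n)"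
  have "0 \<le> \<beta>"
    unfolding \<beta>_def using m_low_nonneg by simp
  have M_int: "M i k integrable_on {a..a + T}"
    by (rule M_integrable[OF \<open>0 \<le> a\<close>])
  have "exp (- 2 * (real (CARD('n) - 1) * (m_up lam phi (x 0) / real CARD('n))) * (a + T - a))
      * min 1 (integral {a..a + T} (\<lambda>s. \<beta> * M i k s)) * (P - proj v k a) \<le> P - proj v i (a + T)"
  proof (rule linked_lower_bound)
    show "0 \<le> P - proj v l a" for l
      using P[of l] by simp
    show "coupling l j s \<le> m_up lam phi (x 0) / real CARD('n)" if "s \<in> {a..a + T}" for l j s
      using that \<open>0 \<le> a\<close> by (intro coupling_le) auto
    show "(\<lambda>s. \<beta> * M i k s) integrable_on {a..a + T}"
      by (rule integrable_on_mult_right[OF M_int])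
    show "0 \<le> \<beta> * M i k s" if "s \<in> {a..a + T}" for s
      using that \<open>0 \<le> a\<close> \<open>0 \<le> \<beta>\<close> M_range[of s i k] by simp
    show "\<beta> * M i k s \<le> coupling i k s" if "s \<in> {a..a + T}" for s
      unfolding \<beta>_def using that \<open>0 \<le> a\<close> by (intro coupling_ge) auto
  qed
  moreover have "\<beta> * (\<mu> * T) \<le> integral {a..a + T} (\<lambda>s. \<beta> * M i k s)"
    using link \<open>0 \<le> \<beta>\<close> by (simp add: mult_left_mono)
  then have "min 1 (\<beta> * (\<mu> * T)) \<le> min 1 (integral {a..a + T} (\<lambda>s. \<beta> * M i k s))"
    by (rule min.mono[OF order.refl])
  then have "isc_factor T \<mu> * (P - proj v k a)
      \<le> exp (- 2 * (real (CARD('n) - 1) * (m_up lam phi (x 0) / real CARD('n))) * (a + T - a))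
        * min 1 (integral {a..a + T} (\<lambda>s. \<beta> * M i k s)) * (P - proj v k a)"
    unfolding isc_factor_def \<beta>_def[symmetric] using P[of k]
    by (intro mult_right_mono mult_left_mono) auto
  ultimately show ?thesis
    by linarith
qed

lemma conf_diam_antitone:
  assumes "0 \<le> t\<^sub>0" "t\<^sub>0 \<le> t"
  shows "conf_diam (x t) \<le> conf_diam (x t\<^sub>0)"
proof (rule conf_diam_le)
  fix i j
  define v where "v = x t $ i - x t $ j"
  obtain P m where P: "\<And>l. proj v l t\<^sub>0 \<le> P" and m: "\<And>l. m \<le> proj v l t\<^sub>0"
    and spread: "P - m \<le> conf_diam (x t\<^sub>0) * norm v"
    unfolding proj_def by (rule inner_spread_le_conf_diam[of "x t\<^sub>0" v]) blast
  have "proj v i t \<le> P"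
    by (rule proj_le_invariant[OF assms P])
  moreover have "proj (- v) j t \<le> - m"
    by (rule proj_le_invariant[OF assms]) (use m in \<open>simp add: proj_def\<close>)
  moreover have "inner v v = proj v i t - proj v j t"
    by (simp add: proj_def v_def inner_diff_left)
  moreover have "proj (- v) j t = - proj v j t"
    by (simp add: proj_def)
  ultimately have "inner v v \<le> conf_diam (x t\<^sub>0) * norm v"
    using spread by linarith
  then show "norm (x t $ i - x t $ j) \<le> conf_diam (x t\<^sub>0)"
    unfolding v_def[symmetric] by (rule norm_le_of_inner_self_le[OF _ conf_diam_nonneg])
qed

lemma conf_diam_contraction:
  assumes isc: "ISC M T \<mu>" and "0 < T" "0 \<le> t"
  shows "conf_diam (x (t + T)) \<le> (1 - isc_factor T \<mu>) * conf_diam (x t)"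
proof (rule conf_diam_le)
  fix i j
  define v where "v = x (t + T) $ i - x (t + T) $ j"
  obtain k where "\<mu> \<le> 1 / T * integral {t..t + T} (M i k)" "\<mu> \<le> 1 / T * integral {t..t + T} (M j k)"
    using isc \<open>0 \<le> t\<close> unfolding ISC_def by blast
  then have link: "\<mu> * T \<le> integral {t..t + T} (M i k)" "\<mu> * T \<le> integral {t..t + T} (M j k)"
    using \<open>0 < T\<close> by (simp_all add: field_simps)
  obtain P m where P: "\<And>l. proj v l t \<le> P" and m: "\<And>l. m \<le> proj v l t"
    and spread: "P - m \<le> conf_diam (x t) * norm v"
    unfolding proj_def by (rule inner_spread_le_conf_diam[of "x t" v]) blast
  have "isc_factor T \<mu> * (P - proj v k t) \<le> P - proj v i (t + T)"
    using \<open>0 \<le> t\<close> \<open>0 < T\<close> P link(1) by (intro proj_gap) auto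
  moreover have "isc_factor T \<mu> * (- m - proj (- v) k t) \<le> - m - proj (- v) j (t + T)"
    using \<open>0 \<le> t\<close> \<open>0 < T\<close> m link(2) by (intro proj_gap) (auto simp: proj_def)
  moreover have "inner v v = proj v i (t + T) - proj v j (t + T)"
    by (simp add: proj_def v_def inner_diff_left)
  moreover have "proj (- v) l s = - proj v l s" for l s
    by (simp add: proj_def)
  ultimately have "inner v v \<le> (1 - isc_factor T \<mu>) * (P - m)"
    by (simp add: algebra_simps)
  also have "\<dots> \<le> (1 - isc_factor T \<mu>) * conf_diam (x t) * norm v"
    using spread isc_factor_le_1[of T \<mu>] \<open>0 < T\<close> by (simp add: mult_left_mono mult.assoc)
  finally show "norm (x (t + T) $ i - x (t + T) $ j) \<le> (1 - isc_factor T \<mu>) * conf_diam (x t)"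
    unfolding v_def[symmetric] using isc_factor_le_1[of T \<mu>] \<open>0 < T\<close> conf_diam_nonneg[of "x t"]
    by (intro norm_le_of_inner_self_le) auto
qed

lemma conf_diam_contraction_over_period:
  assumes "ISC M T \<mu>" "0 < T" "T \<le> \<tau>" "1 - isc_factor T \<mu> \<le> q" "0 \<le> t"
  shows "conf_diam (x (t + \<tau>)) \<le> q * conf_diam (x t)"
proof -
  have "conf_diam (x (t + \<tau>)) \<le> conf_diam (x (t + T))"
    using assms by (intro conf_diam_antitone) auto
  also have "\<dots> \<le> (1 - isc_factor T \<mu>) * conf_diam (x t)"
    using assms by (intro conf_diam_contraction) auto
  also have "\<dots> \<le> q * conf_diam (x t)"
    using assms(4) conf_diam_nonneg by (rule mult_right_mono)
  finally show ?thesis .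
qed

end

lemma consensus_solutionI:
  assumes "\<And>i j. M i j \<in> borel_measurable (restrict_space lebesgue {0..})"
    and "\<And>i j t. 0 \<le> t \<Longrightarrow> 0 \<le> M i j t \<and> M i j t \<le> 1"
    and lam_lip: "\<And>i. \<exists>L. L-lipschitz_on UNIV (lam i)"
    and phi_lip: "\<And>i j. \<exists>L. L-lipschitz_on UNIV (\<lambda>p. phi i j (fst p) (snd p))"
    and lam_pos: "\<And>i y. 0 < lam i y" and phi_pos: "\<And>i j u v. 0 < phi i j u v"
    and "caratheodory_solution (rhs lam M phi) x"
  shows "consensus_solution lam phi M x"
proof
  show "continuous_on UNIV (lam i)" for i
    using lam_lip[of i] lipschitz_on_continuous_on by blast
  show "continuous_on UNIV (\<lambda>p. phi i j (fst p) (snd p))" for i j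
    using phi_lip[of i j] lipschitz_on_continuous_on by blast
  show "0 \<le> lam i y" "0 \<le> phi i j u v" for i j y u v
    using lam_pos[of i y] phi_pos[of i j u v] by simp_all
qed (use assms(1,2,7) in auto)

theorem corollary3:
  fixes lam :: "'n::finite \<Rightarrow> (real^'d)^'n \<Rightarrow> real"
    and phi :: "'n \<Rightarrow> 'n \<Rightarrow> real^'d \<Rightarrow> real^'d \<Rightarrow> real"
    and M :: "'n \<Rightarrow> 'n \<Rightarrow> real \<Rightarrow> real"
    and x :: "real \<Rightarrow> (real^'d)^'n"
    and T \<mu> :: real
  assumes N2: "CARD('n) \<ge> 2"
    and M_meas: "\<And>i j. M i j \<in> borel_measurable (restrict_space lebesgue {0..})"
    and M_range: "\<And>i j t. t \<ge> 0 \<Longrightarrow> 0 \<le> M i j t \<and> M i j t \<le> 1"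
    and lam_lip: "\<And>i. \<exists>L. L-lipschitz_on UNIV (lam i)"
    and phi_lip: "\<And>i j. \<exists>L. L-lipschitz_on UNIV (\<lambda>p. phi i j (fst p) (snd p))"
    and lam_pos: "\<And>i y. lam i y > 0"
    and phi_pos: "\<And>i j a b. phi i j a b > 0"
    and sol: "caratheodory_solution (rhs lam M phi) x"
    and T_pos: "T > 0" and mu_pos: "\<mu> > 0"
    and isc: "ISC M T \<mu>"
  shows "\<forall>n::nat.
     conf_diam (x (real n * real (CARD('n) - 1) * 2 ^ (CARD('n) * (CARD('n) - 1)) * T))
     \<le> (1 - (m_low lam phi (x 0) * \<mu> * T / (real CARD('n) + m_low lam phi (x 0) * \<mu> * T))
              ^ (CARD('n) - 1)
            * exp (- 2 * (real (CARD('n) - 1) / real CARD('n))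
                   * real (CARD('n) - 1) ^ (2 ^ (CARD('n) * (CARD('n) - 1)))
                   * T * m_up lam phi (x 0))) ^ n
       * conf_diam (x 0)"
proof
  fix n :: nat
  interpret consensus_solution lam phi M x
    using M_meas M_range lam_lip phi_lip lam_pos phi_pos sol by (rule consensus_solutionI)
  define \<tau> where "\<tau> = real (CARD('n) - 1) * 2 ^ (CARD('n) * (CARD('n) - 1)) * T"
  define C where "C = 1 - (m_low lam phi (x 0) * \<mu> * T / (real CARD('n) + m_low lam phi (x 0) * \<mu> * T))
      ^ (CARD('n) - 1) * exp (- 2 * (real (CARD('n) - 1) / real CARD('n))
        * real (CARD('n) - 1) ^ (2 ^ (CARD('n) * (CARD('n) - 1))) * T * m_up lam phi (x 0))"
  have rate: "1 - isc_factor T \<mu> \<le> C"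
    using isc_rate_comparison[OF N2 m_low_nonneg m_up_nonneg] T_pos mu_pos
    unfolding C_def isc_factor_def by simp
  have "T \<le> \<tau>"
  proof -
    have "1 * 1 \<le> real (CARD('n) - 1) * (2::real) ^ (CARD('n) * (CARD('n) - 1))"
      using N2 by (intro mult_mono one_le_power) auto
    then show ?thesis
      unfolding \<tau>_def using T_pos by (simp add: mult_le_cancel_right1)
  qed
  then have "conf_diam (x (real n * \<tau>)) \<le> C ^ n * conf_diam (x 0)"
    using T_pos rate isc_factor_le_1[of T \<mu>] conf_diam_contraction_over_period[OF isc T_pos _ rate]
    by (intro geometric_decay_at_multiples) auto
  then show "conf_diam (x (real n * real (CARD('n) - 1) * 2 ^ (CARD('n) * (CARD('n) - 1)) * T))
      \<le> C ^ n * conf_diam (x 0)"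
    by (simp add: \<tau>_def mult.assoc)
qed

end
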